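(* Assume $|V|\ge2$ and let $a\in\mathbb{R}$. If $\underline\kappa(x,y)\ge a$ for all $x,y\in V$ with $x\sim y$ and $x\ne y$, then $\underline\kappa(x,y)\ge a$ for all $x,y\in V$ with $x\ne y$. In particular $\inf_{x\sim y,\,x\ne y}\underline\kappa(x,y)=\inf_{x\ne y}\underline\kappa(x,y)$.
   Context: Let $H=(V,E,w)$ be a weighted hypergraph: $V$ is a finite set, $E$ a set of nonempty subsets of $V$, $w\colon E\to\mathbb{R}_{>0}$. Write $x\sim y$ if some $e\in E$ contains both; $H$ is assumed connected. The degree is $d_x=\sum_{e\ni x}w_e>0$, $D=\mathrm{diag}(d_x)$. The distance $d(x,y)$ is the minimal $n$ with a chain $x=z_0\sim\cdots\sim z_n=y$. $\delta_x$ is the indicator of $x$. $\mathbb{R}^V$ carries the inner product $\langle f,g\rangle=\sum_x f(x)g(x)/d_x$ with norm $\|\cdot\|$. For $e\in E$ let $B_e=\mathrm{Conv}\{\delta_x-\delta_y : x,y\in e\}$. The multivalued hypergraph Laplacian is $L(f)=\{\sum_{e}w_e\mathtt{b}_e(\mathtt{b}_e^\top f) : \mathtt{b}_e\in\operatorname{argmax}_{\mathtt b\in B_e}\mathtt b^\top f\}$ and the normalized Laplacian is $\mathcal{L}f=L(D^{-1}f)$, a maximal monotone operator on $(\mathbb{R}^V,\langle\cdot,\cdot\rangle)$. For $\lambda>0$ the resolvent $J_\lambda=(I+\lambda\mathcal L)^{-1}$ is a single-valued map $\mathbb{R}^V\to\mathbb{R}^V$ (equivalently $J_\lambda f=\operatorname{argmin}_g\{\frac{1}{2\lambda}\|f-g\|^2+Q(D^{-1}g)\}$,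 $Q(g)=\frac12\sum_e w_e\max_{x,y\in e}(g(x)-g(y))^2$). A function $f$ is weighted $1$-Lipschitz if $|f(x)/d_x-f(y)/d_y|\le d(x,y)$ for all $x,y$; $\mathrm{Lip}^1_w(V)$ denotes the set of such functions. $\mathrm{KD}_\lambda(x,y)=\sup\{\langle J_\lambda f,\delta_x-\delta_y\rangle : f\in\mathrm{Lip}^1_w(V)\}$. For $x\ne y$: $\kappa_\lambda(x,y)=1-\mathrm{KD}_\lambda(x,y)/d(x,y)$ and $\underline\kappa(x,y)=\liminf_{\lambda\downarrow0}\kappa_\lambda(x,y)/\lambda$. *)

theory Defs
  imports "HOL-Analysis.Analysis" "HOL-Library.Liminf_Limsup"
begin

text \<open>Weighted hypergraph on a finite vertex type 'v (V = UNIV), hyperedges E, weights w.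
  Functions on V are vectors real^'v.\<close>

definition hdeg :: "'v set set \<Rightarrow> ('v set \<Rightarrow> real) \<Rightarrow> 'v \<Rightarrow> real" where
  "hdeg E w x = (\<Sum>e\<in>{e\<in>E. x \<in> e}. w e)"

definition hadj :: "'v set set \<Rightarrow> 'v \<Rightarrow> 'v \<Rightarrow> bool" where
  "hadj E x y \<longleftrightarrow> (\<exists>e\<in>E. x \<in> e \<and> y \<in> e)"

definition hdist :: "'v set set \<Rightarrow> 'v \<Rightarrow> 'v \<Rightarrow> nat" where
  "hdist E x y = (LEAST n. (hadj E ^^ n) x y)"

definition hdelta :: "'v::finite \<Rightarrow> real^'v" where
  "hdelta x = axis x 1"

definition Bset :: "'v::finite set \<Rightarrow> (real^'v) set" where
  "Bset e = convex hull {hdelta x - hdelta y | x y. x \<in> e \<and> y \<in> e}"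

definition hLap :: "'v::finite set set \<Rightarrow> ('v set \<Rightarrow> real) \<Rightarrow> real^'v \<Rightarrow> (real^'v) set" where
  "hLap E w f = {(\<Sum>e\<in>E. (w e * (b e \<bullet> f)) *\<^sub>R b e) | b.
       \<forall>e\<in>E. b e \<in> Bset e \<and> (\<forall>c\<in>Bset e. c \<bullet> f \<le> b e \<bullet> f)}"

definition Dinv :: "'v::finite set set \<Rightarrow> ('v set \<Rightarrow> real) \<Rightarrow> real^'v \<Rightarrow> real^'v" where
  "Dinv E w f = (\<chi> x. f $ x / hdeg E w x)"

definition nLap :: "'v::finite set set \<Rightarrow> ('v set \<Rightarrow> real) \<Rightarrow> real^'v \<Rightarrow> (real^'v) set" where
  "nLap E w f = hLap E w (Dinv E w f)"

text \<open>Resolvent J_lam = (I + lam \<L>)^{-1}: J_lam f is the unique g with f \<in> g + lam \<L> g.\<close>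
definition resolvent :: "'v::finite set set \<Rightarrow> ('v set \<Rightarrow> real) \<Rightarrow> real \<Rightarrow> real^'v \<Rightarrow> real^'v" where
  "resolvent E w lam f = (THE g. \<exists>u\<in>nLap E w g. f = g + lam *\<^sub>R u)"

definition winner :: "'v::finite set set \<Rightarrow> ('v set \<Rightarrow> real) \<Rightarrow> real^'v \<Rightarrow> real^'v \<Rightarrow> real" where
  "winner E w f g = (\<Sum>x\<in>UNIV. f $ x * g $ x / hdeg E w x)"

definition LipW :: "'v::finite set set \<Rightarrow> ('v set \<Rightarrow> real) \<Rightarrow> (real^'v) set" where
  "LipW E w = {f. \<forall>x y. \<bar>f $ x / hdeg E w x - f $ y / hdeg E w y\<bar> \<le> real (hdist E x y)}"

definition KD :: "'v::finite set set \<Rightarrow> ('v set \<Rightarrow> real) \<Rightarrow> real \<Rightarrow> 'v \<Rightarrow> 'v \<Rightarrow> real" where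
  "KD E w lam x y = (SUP f\<in>LipW E w. winner E w (resolvent E w lam f) (hdelta x - hdelta y))"

definition kappa :: "'v::finite set set \<Rightarrow> ('v set \<Rightarrow> real) \<Rightarrow> real \<Rightarrow> 'v \<Rightarrow> 'v \<Rightarrow> real" where
  "kappa E w lam x y = 1 - KD E w lam x y / real (hdist E x y)"

definition kappa_low :: "'v::finite set set \<Rightarrow> ('v set \<Rightarrow> real) \<Rightarrow> 'v \<Rightarrow> 'v \<Rightarrow> ereal" where
  "kappa_low E w x y = Liminf (at_right 0) (\<lambda>lam. ereal (kappa E w lam x y / lam))"

end

theory Submission
  imports Defs
begin

text \<open>If \<open>\<kappa>_\<lambda>(z,y) \<ge> a'\<lambda>\<close> for all adjacent \<open>z, y\<close> and small \<open>\<lambda>\<close>, then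
  \<open>\<langle>J_\<lambda> f, \<delta>_z - \<delta>_y\<rangle> \<le> 1 - a'\<lambda>\<close> for every weighted 1-Lipschitz \<open>f\<close>.
  Since \<open>\<langle>g, \<delta>_x - \<delta>_y\<rangle> = g(x)/d_x - g(y)/d_y\<close> telescopes along a shortest chain of
  length \<open>n = d(x,y)\<close>, this gives \<open>KD_\<lambda>(x,y) \<le> n (1 - a'\<lambda>)\<close>, i.e. \<open>\<kappa>_\<lambda>(x,y) \<ge> a'\<lambda>\<close>.

  The analytic input is that the suprema defining \<open>KD_\<lambda>\<close> are finite, which needs \<open>J_\<lambda>\<close>
  to be a genuine map: the inclusion \<open>f \<in> g + \<lambda> \<L> g\<close> has a unique solution \<open>g\<close>.
  Uniqueness is monotonicity of \<open>\<L>\<close>. Existence comes from minimising the energy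
  \<open>1/2 \<Sum>_x d_x h(x)\<^sup>2 - f\<cdot>h + \<lambda> Q(h)\<close>, a maximum of finitely many quadratics, whose
  first-order condition at a minimiser \<open>h\<close> yields \<open>f \<in> D h + \<lambda> L(h)\<close>. The suprema are then
  finite because \<open>J_\<lambda>\<close> does not increase the distance to the zeros \<open>c\<cdot>d\<close> of \<open>\<L>\<close>.\<close>

lemma convex_hull_finite_image:
  fixes g :: "'a \<Rightarrow> 'b::real_vector"
  assumes "finite A" "y \<in> convex hull (g ` A)"
  obtains \<mu> where "\<forall>a\<in>A. 0 \<le> \<mu> a" "sum \<mu> A = 1" "(\<Sum>a\<in>A. \<mu> a *\<^sub>R g a) = y"
proof -
  let ?W = "{y. \<exists>\<mu>. (\<forall>a\<in>A. 0 \<le> \<mu> a) \<and> sum \<mu> A = 1 \<and> (\<Sum>a\<in>A. \<mu> a *\<^sub>R g a) = y}"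
  have "convex hull (g ` A) \<subseteq> ?W"
  proof (rule hull_minimal)
    show "g ` A \<subseteq> ?W"
    proof
      fix z assume "z \<in> g ` A"
      then obtain a where a: "a \<in> A" "z = g a" by blast
      show "z \<in> ?W"
        by (rule CollectI, rule exI[of _ "\<lambda>b. if b = a then 1 else 0"])
          (use a assms(1) in \<open>simp add: if_distrib[of "\<lambda>c. c *\<^sub>R _"] cong: if_cong\<close>)
    qed
    show "convex ?W"
    proof (rule convexI)
      fix y1 y2 and u v :: real
      assume y: "y1 \<in> ?W" "y2 \<in> ?W" and uv: "0 \<le> u" "0 \<le> v" "u + v = 1"
      from y obtain \<mu>1 \<mu>2 where
        \<mu>1: "\<forall>a\<in>A. 0 \<le> \<mu>1 a" "sum \<mu>1 A = 1" "(\<Sum>a\<in>A. \<mu>1 a *\<^sub>R g a) = y1" and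
        \<mu>2: "\<forall>a\<in>A. 0 \<le> \<mu>2 a" "sum \<mu>2 A = 1" "(\<Sum>a\<in>A. \<mu>2 a *\<^sub>R g a) = y2"
        by blast
      show "u *\<^sub>R y1 + v *\<^sub>R y2 \<in> ?W"
        by (rule CollectI, rule exI[of _ "\<lambda>a. u * \<mu>1 a + v * \<mu>2 a"])
          (use \<mu>1 \<mu>2 uv in \<open>auto simp: sum.distrib sum_distrib_left[symmetric] scaleR_add_left
            scaleR_sum_right\<close>)
    qed
  qed
  with assms(2) that show ?thesis by blast
qed

lemma continuous_on_Max_finite:
  fixes F :: "'i \<Rightarrow> 'a::topological_space \<Rightarrow> 'b::linorder_topology"
  assumes "finite I" "I \<noteq> {}" "\<And>i. i \<in> I \<Longrightarrow> continuous_on S (F i)"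
  shows "continuous_on S (\<lambda>x. Max ((\<lambda>i. F i x) ` I))"
  using assms
proof (induction I rule: finite_ne_induct)
  case (singleton i)
  then show ?case by simp
next
  case (insert i I)
  then show ?case by (auto simp: Max_insert intro!: continuous_on_max)
qed

text \<open>If \<open>0\<close> were not in the hull of the active gradients, a separating direction would
  decrease every active function to first order, while the inactive ones stay below the maximum
  by continuity.\<close>
lemma zero_in_convex_hull_active_gradients:
  fixes \<phi> :: "'s \<Rightarrow> 'a::euclidean_space \<Rightarrow> real"
  assumes S: "finite S" "S \<noteq> {}"
    and expand: "\<And>s t v. s \<in> S \<Longrightarrow> \<phi> s (h0 + t *\<^sub>R v) = \<phi> s h0 + t * (inner (G s) v + t * C s v)"
    and min: "\<And>h. Max ((\<lambda>s. \<phi> s h0) ` S) \<le> Max ((\<lambda>s. \<phi> s h) ` S)"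
  shows "0 \<in> convex hull (G ` {s\<in>S. \<phi> s h0 = Max ((\<lambda>s. \<phi> s h0) ` S)})"
proof (rule ccontr)
  let ?m = "Max ((\<lambda>s. \<phi> s h0) ` S)"
  let ?A = "{s\<in>S. \<phi> s h0 = ?m}"
  let ?K = "convex hull (G ` ?A)"
  assume "0 \<notin> ?K"
  moreover have "closed ?K"
    using S(1) by (intro compact_imp_closed compact_convex_hull finite_imp_compact) simp
  ultimately obtain a b where ab: "0 < b" "\<forall>x\<in>?K. inner a x > b"
    using separating_hyperplane_closed_0[of ?K] convex_convex_hull by blast
  define v where "v = - a"
  have descent: "inner (G s) v < 0" if "s \<in> ?A" for s
    using ab hull_inc[of "G s" "G ` ?A" convex] that by (auto simp: inner_commute v_def)
  have "\<forall>s\<in>S. eventually (\<lambda>t. \<phi> s (h0 + t *\<^sub>R v) < ?m) (at_right 0)"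
  proof
    fix s assume s: "s \<in> S"
    show "eventually (\<lambda>t. \<phi> s (h0 + t *\<^sub>R v) < ?m) (at_right 0)"
    proof (cases "s \<in> ?A")
      case True
      have "((\<lambda>t. inner (G s) v + t * C s v) \<longlongrightarrow> inner (G s) v) (at_right 0)"
        by (auto intro!: tendsto_eq_intros)
      from order_tendstoD(2)[OF this descent[OF True]] eventually_at_right_less
      show ?thesis
      proof eventually_elim
        case (elim t)
        then have "t * (inner (G s) v + t * C s v) < 0" by (simp add: mult_pos_neg)
        then show ?case using True by (simp add: expand[OF s])
      qed
    next
      case False
      have "\<phi> s h0 < ?m" using False s S by (simp add: order.not_eq_order_implies_strict)
      moreover have "((\<lambda>t. \<phi> s h0 + t * (inner (G s) v + t * C s v)) \<longlongrightarrow> \<phi> s h0) (at_right 0)"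
        by (auto intro!: tendsto_eq_intros)
      ultimately show ?thesis by (simp add: order_tendstoD(2) expand[OF s])
    qed
  qed
  then have "eventually (\<lambda>t. \<forall>s\<in>S. \<phi> s (h0 + t *\<^sub>R v) < ?m) (at_right 0)"
    by (rule eventually_ball_finite[OF S(1)])
  then obtain t where "\<forall>s\<in>S. \<phi> s (h0 + t *\<^sub>R v) < ?m"
    using eventually_happens[of _ "at_right (0::real)"] by auto
  then have "Max ((\<lambda>s. \<phi> s (h0 + t *\<^sub>R v)) ` S) < ?m" using S by simp
  with min show False by (metis not_le)
qed

lemma abs_le_1_plus_square: "\<bar>t::real\<bar> \<le> 1 + t\<^sup>2"
proof -
  have "0 \<le> (\<bar>t\<bar> - 1)\<^sup>2" by simp
  then show ?thesis by (simp add: power2_eq_square algebra_simps)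
qed

lemma hdelta_nth: "hdelta a $ x = (if x = a then 1 else 0)"
  by (simp add: hdelta_def axis_def)

lemma inner_hdelta: "inner (hdelta a) h = h $ a"
  by (simp add: hdelta_def inner_axis')

lemma winner_hdelta_diff:
  "winner E w g (hdelta x - hdelta y) = g $ x / hdeg E w x - g $ y / hdeg E w y"
proof -
  have "g $ z * (hdelta x - hdelta y) $ z / hdeg E w z =
      (if z = x then g $ z / hdeg E w z else 0) - (if z = y then g $ z / hdeg E w z else 0)" for z
    by (simp add: hdelta_nth)
  then show ?thesis by (simp add: winner_def sum_subtractf)
qed

lemma winner_eq_inner_Dinv: "winner E w g h = inner (Dinv E w g) h"
  by (simp add: winner_def Dinv_def inner_vec_def)

lemma Dinv_diff: "Dinv E w (g - h) = Dinv E w g - Dinv E w h"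
  by (simp add: Dinv_def vec_eq_iff diff_divide_distrib)

lemma diff_hdelta_in_Bset: "x \<in> e \<Longrightarrow> y \<in> e \<Longrightarrow> hdelta x - hdelta y \<in> Bset e"
  unfolding Bset_def by (rule hull_inc) blast

lemma zero_in_Bset: "e \<noteq> {} \<Longrightarrow> 0 \<in> Bset e"
  using diff_hdelta_in_Bset by fastforce

lemma Bset_inner_le:
  assumes "\<forall>x\<in>e. \<forall>y\<in>e. h $ x - h $ y \<le> M" "c \<in> Bset e"
  shows "inner c h \<le> M"
proof -
  have "convex {c. inner c h \<le> M}"
    using convex_halfspace_le[of h M] by (simp add: inner_commute)
  then have "Bset e \<subseteq> {c. inner c h \<le> M}"
    unfolding Bset_def using assms(1) by (intro hull_minimal) (auto simp: inner_diff_left inner_hdelta)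
  with assms(2) show ?thesis by auto
qed

lemma Bset_inner_const: "c \<in> Bset e \<Longrightarrow> inner c (\<chi> x. k) = 0"
proof -
  have "convex {c. inner c (\<chi> x. k) = 0}"
    by (rule subspace_imp_convex) (auto simp: subspace_def inner_add_left)
  then have "Bset e \<subseteq> {c. inner c (\<chi> x. k) = 0}"
    unfolding Bset_def by (intro hull_minimal) (auto simp: inner_diff_left inner_hdelta)
  then show "c \<in> Bset e \<Longrightarrow> inner c (\<chi> x. k) = 0" by auto
qed

definition edge_span :: "real^'v::finite \<Rightarrow> 'v set \<Rightarrow> real" where
  "edge_span h e = Max ((\<lambda>(x, y). h $ x - h $ y) ` (e \<times> e))"

lemma edge_span_ge: "x \<in> e \<Longrightarrow> y \<in> e \<Longrightarrow> h $ x - h $ y \<le> edge_span h e"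
  unfolding edge_span_def by (rule Max_ge) force+

lemma edge_span_attained:
  assumes "e \<noteq> {}"
  obtains x y where "x \<in> e" "y \<in> e" "h $ x - h $ y = edge_span h e"
proof -
  have "edge_span h e \<in> (\<lambda>(x, y). h $ x - h $ y) ` (e \<times> e)"
    unfolding edge_span_def using assms by (intro Max_in) auto
  with that show ?thesis by auto
qed

definition oriented_diff :: "real^'v::finite \<Rightarrow> 'v \<Rightarrow> 'v \<Rightarrow> real^'v" where
  "oriented_diff h x y = (if h $ y \<le> h $ x then hdelta x - hdelta y else hdelta y - hdelta x)"

lemma oriented_diff_in_Bset: "x \<in> e \<Longrightarrow> y \<in> e \<Longrightarrow> oriented_diff h x y \<in> Bset e"
  by (simp add: oriented_diff_def diff_hdelta_in_Bset)

lemma inner_oriented_diff: "inner (oriented_diff h x y) h = \<bar>h $ x - h $ y\<bar>"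
  by (simp add: oriented_diff_def inner_diff_left inner_hdelta)

lemma scaleR_diff_hdelta_oriented:
  "(h $ x - h $ y) *\<^sub>R (hdelta x - hdelta y) = \<bar>h $ x - h $ y\<bar> *\<^sub>R oriented_diff h x y"
  by (simp add: oriented_diff_def algebra_simps)

lemma hdist_eq_1_if_adj:
  assumes "hadj E x y" "x \<noteq> y"
  shows "hdist E x y = 1"
  unfolding hdist_def
proof (rule Least_equality)
  show "(hadj E ^^ 1) x y" using assms by (simp only: relpowp_1)
next
  fix m assume "(hadj E ^^ m) x y"
  then show "1 \<le> m" using assms(2) by (cases m) auto
qed

lemma relpowp_hdist:
  assumes "(hadj E)\<^sup>*\<^sup>* x y"
  shows "(hadj E ^^ hdist E x y) x y"
proof -
  obtain n where "(hadj E ^^ n) x y" using assms rtranclp_power by metis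
  then show ?thesis unfolding hdist_def by (rule LeastI)
qed

definition hdist_moment :: "'v::finite set set \<Rightarrow> ('v set \<Rightarrow> real) \<Rightarrow> 'v \<Rightarrow> real" where
  "hdist_moment E w z = (\<Sum>x\<in>UNIV. hdeg E w x * (real (hdist E x z))\<^sup>2)"

locale weighted_hypergraph =
  fixes E :: "'v::finite set set" and w :: "'v set \<Rightarrow> real"
  assumes edges_nonempty: "\<forall>e\<in>E. e \<noteq> {}"
    and weights_pos: "\<forall>e\<in>E. w e > 0"
    and deg_pos: "\<forall>x. hdeg E w x > 0"
begin

lemma hLap_monotone:
  assumes "u1 \<in> hLap E w h1" "u2 \<in> hLap E w h2"
  shows "inner (h1 - h2) (u1 - u2) \<ge> 0"
proof -
  obtain b1 where b1: "\<forall>e\<in>E. b1 e \<in> Bset e \<and> (\<forall>c\<in>Bset e. inner c h1 \<le> inner (b1 e) h1)"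
    and u1: "u1 = (\<Sum>e\<in>E. (w e * inner (b1 e) h1) *\<^sub>R b1 e)"
    using assms(1) unfolding hLap_def by blast
  obtain b2 where b2: "\<forall>e\<in>E. b2 e \<in> Bset e \<and> (\<forall>c\<in>Bset e. inner c h2 \<le> inner (b2 e) h2)"
    and u2: "u2 = (\<Sum>e\<in>E. (w e * inner (b2 e) h2) *\<^sub>R b2 e)"
    using assms(2) unfolding hLap_def by blast
  have "inner (h1 - h2) (u1 - u2) = (\<Sum>e\<in>E. w e *
      (inner (b1 e) h1 * (inner (b1 e) h1 - inner (b1 e) h2)
        - inner (b2 e) h2 * (inner (b2 e) h1 - inner (b2 e) h2)))"
    unfolding u1 u2
    by (simp add: inner_diff_left inner_diff_right inner_sum_right sum_subtractf[symmetric]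
        algebra_simps inner_commute)
  also have "\<dots> \<ge> 0"
  proof (rule sum_nonneg)
    fix e assume e: "e \<in> E"
    define M1 M2 p q where "M1 = inner (b1 e) h1" and "M2 = inner (b2 e) h2"
      and "p = inner (b1 e) h2" and "q = inner (b2 e) h1"
    have "0 \<in> Bset e" using edges_nonempty e zero_in_Bset by blast
    then have "M1 \<ge> 0" "M2 \<ge> 0" using b1 b2 e unfolding M1_def M2_def by force+
    moreover have "p \<le> M2" "q \<le> M1" using b1 b2 e unfolding p_def q_def M1_def M2_def by blast+
    ultimately have "M1 * p \<le> M1 * M2" "M2 * q \<le> M2 * M1" by (simp_all add: mult_left_mono)
    then have "0 \<le> M1 * (M1 - p) - M2 * (q - M2)"
      using zero_le_power2[of "M1 - M2"] by (simp add: power2_eq_square algebra_simps)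
    moreover have "0 \<le> w e" using weights_pos e by fastforce
    ultimately show "0 \<le> w e * (inner (b1 e) h1 * (inner (b1 e) h1 - inner (b1 e) h2)
        - inner (b2 e) h2 * (inner (b2 e) h1 - inner (b2 e) h2))"
      unfolding M1_def M2_def p_def q_def by (simp only: mult_nonneg_nonneg)
  qed
  finally show ?thesis .
qed

lemma nLap_monotone:
  assumes "u1 \<in> nLap E w g1" "u2 \<in> nLap E w g2"
  shows "winner E w (g1 - g2) (u1 - u2) \<ge> 0"
  using hLap_monotone[OF assms[unfolded nLap_def]] by (simp add: winner_eq_inner_Dinv Dinv_diff)

lemma winner_self_nonneg: "winner E w g g \<ge> 0"
  unfolding winner_def using deg_pos by (auto intro!: sum_nonneg divide_nonneg_pos)

lemma winner_self_le_0_imp_zero: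
  assumes "winner E w g g \<le> 0"
  shows "g = 0"
proof -
  have "\<forall>x\<in>UNIV. g $ x * g $ x / hdeg E w x \<ge> 0"
    using deg_pos by (auto intro!: divide_nonneg_pos)
  moreover have "winner E w g g = 0" using assms winner_self_nonneg by (simp add: eq_iff)
  ultimately have "\<forall>x\<in>UNIV. g $ x * g $ x / hdeg E w x = 0"
    unfolding winner_def by (simp add: sum_nonneg_eq_0_iff)
  then show ?thesis using deg_pos by (auto simp: vec_eq_iff) (metis order_less_irrefl)
qed

lemma resolvent_inclusion_unique:
  assumes "lam > 0" "u1 \<in> nLap E w g1" "u2 \<in> nLap E w g2"
    and "g1 + lam *\<^sub>R u1 = g2 + lam *\<^sub>R u2"
  shows "g1 = g2"
proof -
  have diff: "g1 - g2 = lam *\<^sub>R (u2 - u1)" using assms(4) by (simp add: algebra_simps)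
  have "winner E w (g1 - g2) (g1 - g2) = - lam * winner E w (g1 - g2) (u1 - u2)"
    unfolding winner_eq_inner_Dinv by (subst (2) diff) (simp add: inner_diff_right algebra_simps)
  also have "\<dots> \<le> 0" using assms(1) nLap_monotone[OF assms(2,3)] by simp
  finally show ?thesis using winner_self_le_0_imp_zero[of "g1 - g2"] by simp
qed

lemma zero_in_nLap_deg_multiple: "0 \<in> nLap E w (\<chi> x. c * hdeg E w x)"
proof -
  have "Dinv E w (\<chi> x. c * hdeg E w x) = (\<chi> x. c)"
    using deg_pos by (simp add: Dinv_def vec_eq_iff) (metis order_less_irrefl)
  moreover have "(\<Sum>e\<in>E. (w e * inner 0 (\<chi> x. c)) *\<^sub>R (0 :: real^'v)) \<in> hLap E w (\<chi> x. c)"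
    unfolding hLap_def
    by (intro CollectI exI[of _ "\<lambda>e. 0"]) (auto simp: Bset_inner_const zero_in_Bset edges_nonempty)
  ultimately show ?thesis by (simp add: nLap_def)
qed

text \<open>Since \<open>c\<cdot>d\<close> is a zero of \<open>\<L>\<close>, monotonicity gives \<open>\<langle>a, u\<rangle> \<ge> 0\<close> for \<open>a = g - c\<cdot>d\<close>, hence \<open>\<langle>a,a\<rangle> \<le> \<langle>a, a + \<lambda>u\<rangle>\<close>,
  and the right-hand side is at most the mean of the two squared norms.\<close>
lemma resolvent_inclusion_nonexpansive:
  fixes c :: real
  assumes "lam > 0" "u \<in> nLap E w g" "f = g + lam *\<^sub>R u"
  defines "k \<equiv> \<chi> x. c * hdeg E w x"
  shows "winner E w (g - k) (g - k) \<le> winner E w (f - k) (f - k)"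
proof -
  define a b where "a = g - k" and "b = f - k"
  have b: "b = a + lam *\<^sub>R u" unfolding a_def b_def assms(3) by (simp add: algebra_simps)
  have "winner E w a u \<ge> 0"
    using nLap_monotone[OF assms(2) zero_in_nLap_deg_multiple[of c]] by (simp add: a_def k_def)
  then have "winner E w a a \<le> winner E w a b"
    using assms(1) unfolding b winner_eq_inner_Dinv by (simp add: inner_add_right)
  also have "\<dots> \<le> (winner E w a a + winner E w b b) / 2"
  proof -
    have "a $ x * b $ x / hdeg E w x \<le> (a $ x * a $ x / hdeg E w x + b $ x * b $ x / hdeg E w x) / 2" for x
    proof -
      have "a $ x * b $ x \<le> (a $ x * a $ x + b $ x * b $ x) / 2"
        using zero_le_power2[of "a $ x - b $ x"] by (simp add: algebra_simps power2_eq_square)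
      then show ?thesis
        using deg_pos[rule_format, of x] by (simp add: divide_right_mono add_divide_distrib[symmetric]
            divide_divide_eq_left[symmetric] del: divide_divide_eq_left)
    qed
    then have "(\<Sum>x\<in>UNIV. a $ x * b $ x / hdeg E w x)
        \<le> (\<Sum>x\<in>UNIV. (a $ x * a $ x / hdeg E w x + b $ x * b $ x / hdeg E w x) / 2)"
      by (rule sum_mono)
    then show ?thesis unfolding winner_def by (simp add: sum_divide_distrib[symmetric] sum.distrib)
  qed
  finally show ?thesis unfolding a_def b_def by simp
qed

end

lemma sum_weighted_square_line:
  fixes c p q :: "'i \<Rightarrow> real"
  shows "(\<Sum>i\<in>I. c i * (p i + t * q i)\<^sup>2)
    = (\<Sum>i\<in>I. c i * (p i)\<^sup>2) + 2 * t * (\<Sum>i\<in>I. c i * p i * q i) + t * t * (\<Sum>i\<in>I. c i * (q i)\<^sup>2)"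
proof -
  have "(\<Sum>i\<in>I. c i * (p i + t * q i)\<^sup>2)
      = (\<Sum>i\<in>I. c i * (p i)\<^sup>2 + 2 * t * (c i * p i * q i) + t * t * (c i * (q i)\<^sup>2))"
    by (rule sum.cong) (simp_all add: power2_eq_square algebra_simps)
  then show ?thesis by (simp add: sum.distrib sum_distrib_left)
qed

text \<open>Since \<open>Q(h)\<close> is the maximum
  over selections of \<open>1/2 \<Sum>_e w_e (h(x_e) - h(y_e))\<^sup>2\<close>, \<open>energy\<close> is the functional whose
  minimiser \<open>h\<close> gives the resolvent \<open>J_\<lambda> f = D h\<close>.\<close>
locale resolvent_energy = weighted_hypergraph E w for E :: "'v::finite set set" and w +
  fixes f :: "real^'v" and lam :: real
  assumes lam_pos: "lam > 0"
begin

abbreviation deg :: "'v \<Rightarrow> real" where "deg \<equiv> hdeg E w"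

definition selections :: "('v set \<Rightarrow> 'v \<times> 'v) set" where
  "selections = PiE E (\<lambda>e. e \<times> e)"

definition energy_sel :: "('v set \<Rightarrow> 'v \<times> 'v) \<Rightarrow> real^'v \<Rightarrow> real" where
  "energy_sel s h = (\<Sum>x\<in>UNIV. deg x * (h $ x)\<^sup>2) / 2 - inner f h
     + lam / 2 * (\<Sum>e\<in>E. w e * (h $ fst (s e) - h $ snd (s e))\<^sup>2)"

definition energy :: "real^'v \<Rightarrow> real" where
  "energy h = Max ((\<lambda>s. energy_sel s h) ` selections)"

definition grad_sel :: "('v set \<Rightarrow> 'v \<times> 'v) \<Rightarrow> real^'v \<Rightarrow> real^'v" where
  "grad_sel s h = (\<chi> x. deg x * h $ x - f $ x) + lam *\<^sub>R (\<Sum>e\<in>E.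
      (w e * (h $ fst (s e) - h $ snd (s e))) *\<^sub>R (hdelta (fst (s e)) - hdelta (snd (s e))))"

definition curv_sel :: "('v set \<Rightarrow> 'v \<times> 'v) \<Rightarrow> real^'v \<Rightarrow> real" where
  "curv_sel s v = (\<Sum>x\<in>UNIV. deg x * (v $ x)\<^sup>2) / 2
     + lam / 2 * (\<Sum>e\<in>E. w e * (v $ fst (s e) - v $ snd (s e))\<^sup>2)"

lemma finite_selections: "finite selections"
  unfolding selections_def by (rule finite_PiE) auto

lemma selections_nonempty: "selections \<noteq> {}"
  unfolding selections_def using edges_nonempty by (auto simp: PiE_eq_empty_iff)

lemma selection_in_edge: "s \<in> selections \<Longrightarrow> e \<in> E \<Longrightarrow> s e \<in> e \<times> e"
  unfolding selections_def by (auto simp: PiE_iff)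

lemma energy_sel_le_energy: "s \<in> selections \<Longrightarrow> energy_sel s h \<le> energy h"
  unfolding energy_def using finite_selections by (auto intro!: Max_ge)

lemma inner_grad_sel: "inner (grad_sel s h) v = (\<Sum>x\<in>UNIV. deg x * h $ x * v $ x) - inner f v
   + lam * (\<Sum>e\<in>E. w e * (h $ fst (s e) - h $ snd (s e)) * (v $ fst (s e) - v $ snd (s e)))"
proof -
  have "inner (\<chi> x. deg x * h $ x - f $ x) v = (\<Sum>x\<in>UNIV. deg x * h $ x * v $ x) - inner f v"
    by (simp add: inner_vec_def sum_subtractf algebra_simps)
  then show ?thesis
    by (simp add: grad_sel_def inner_add_left inner_sum_left inner_diff_left inner_hdelta mult.assoc)
qed

lemma energy_sel_line:
  "energy_sel s (h + t *\<^sub>R v) = energy_sel s h + t * (inner (grad_sel s h) v + t * curv_sel s v)"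
proof -
  have vertices: "(\<Sum>x\<in>UNIV. deg x * ((h + t *\<^sub>R v) $ x)\<^sup>2) = (\<Sum>x\<in>UNIV. deg x * (h $ x)\<^sup>2)
      + 2 * t * (\<Sum>x\<in>UNIV. deg x * h $ x * v $ x) + t * t * (\<Sum>x\<in>UNIV. deg x * (v $ x)\<^sup>2)"
    using sum_weighted_square_line[of deg "\<lambda>x. h $ x" t "\<lambda>x. v $ x" UNIV] by simp
  have "(\<Sum>e\<in>E. w e * ((h + t *\<^sub>R v) $ fst (s e) - (h + t *\<^sub>R v) $ snd (s e))\<^sup>2)
      = (\<Sum>e\<in>E. w e * ((h $ fst (s e) - h $ snd (s e)) + t * (v $ fst (s e) - v $ snd (s e)))\<^sup>2)"
    by (simp add: algebra_simps)
  also have "\<dots> = (\<Sum>e\<in>E. w e * (h $ fst (s e) - h $ snd (s e))\<^sup>2)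
      + 2 * t * (\<Sum>e\<in>E. w e * (h $ fst (s e) - h $ snd (s e)) * (v $ fst (s e) - v $ snd (s e)))
      + t * t * (\<Sum>e\<in>E. w e * (v $ fst (s e) - v $ snd (s e))\<^sup>2)"
    by (rule sum_weighted_square_line)
  finally have edges: "(\<Sum>e\<in>E. w e * ((h + t *\<^sub>R v) $ fst (s e) - (h + t *\<^sub>R v) $ snd (s e))\<^sup>2)
      = \<dots>" .
  show ?thesis
    unfolding energy_sel_def curv_sel_def inner_grad_sel vertices edges
    by (simp add: inner_add_right algebra_simps)
qed

lemma energy_coercive:
  obtains m where "m > 0" "\<And>s h. m / 2 * (norm h)\<^sup>2 - norm f * norm h \<le> energy_sel s h"
proof
  define m where "m = Min (range deg)"
  show "m > 0" unfolding m_def using deg_pos by (subst Min_gr_iff) auto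
  fix s and h :: "real^'v"
  have "(norm h)\<^sup>2 = (\<Sum>x\<in>UNIV. (h $ x)\<^sup>2)"
    by (simp only: power2_norm_eq_inner) (simp add: inner_vec_def power2_eq_square)
  then have "m * (norm h)\<^sup>2 = (\<Sum>x\<in>UNIV. m * (h $ x)\<^sup>2)"
    by (simp add: sum_distrib_left)
  also have "\<dots> \<le> (\<Sum>x\<in>UNIV. deg x * (h $ x)\<^sup>2)"
    unfolding m_def by (intro sum_mono mult_right_mono) auto
  finally have "m * (norm h)\<^sup>2 \<le> (\<Sum>x\<in>UNIV. deg x * (h $ x)\<^sup>2)" .
  moreover have "inner f h \<le> norm f * norm h" by (rule norm_cauchy_schwarz)
  moreover have "0 \<le> lam / 2 * (\<Sum>e\<in>E. w e * (h $ fst (s e) - h $ snd (s e))\<^sup>2)"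
    using lam_pos weights_pos by (auto intro!: sum_nonneg mult_nonneg_nonneg)
  ultimately show "m / 2 * (norm h)\<^sup>2 - norm f * norm h \<le> energy_sel s h"
    unfolding energy_sel_def by linarith
qed

lemma energy_has_minimiser: "\<exists>h0. \<forall>h. energy h0 \<le> energy h"
proof -
  obtain m where m: "m > 0" "\<And>s h. m / 2 * (norm h)\<^sup>2 - norm f * norm h \<le> energy_sel s h"
    using energy_coercive by blast
  obtain s0 where s0: "s0 \<in> selections" using selections_nonempty by blast
  define R where "R = 2 * norm f / m"
  have "R \<ge> 0" unfolding R_def using m by simp
  have "continuous_on (cball 0 R) energy"
    unfolding energy_def energy_sel_def
    by (intro continuous_on_Max_finite finite_selections selections_nonempty continuous_intros) auto
  then obtain h0 where h0: "h0 \<in> cball 0 R" "\<forall>h\<in>cball 0 R. energy h0 \<le> energy h"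
    using continuous_attains_inf[of "cball 0 R" energy] \<open>R \<ge> 0\<close> by auto
  have "energy 0 = 0"
    using selections_nonempty by (simp add: energy_def energy_sel_def image_constant_conv)
  then have "energy h0 \<le> 0" using h0(2)[rule_format, of 0] \<open>R \<ge> 0\<close> by simp
  moreover have "energy h > 0" if "h \<notin> cball 0 R" for h
  proof -
    have "norm h > R" "norm h > 0" using that \<open>R \<ge> 0\<close> by auto
    then have "m / 2 * (norm h)\<^sup>2 - norm f * norm h > 0"
      using m(1) by (simp add: R_def field_simps power2_eq_square)
    then show ?thesis using m(2)[where s = s0 and h = h] energy_sel_le_energy[OF s0, of h] by linarith
  qed
  ultimately show ?thesis using h0 by (metis linorder_not_le order.trans less_le_not_le)
qed

text \<open>Otherwise replacing the pair chosen at \<open>e\<close> by a maximising pair would increase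
  \<open>energy_sel\<close> beyond the maximum.\<close>
lemma active_selection_edge_span:
  assumes s: "s \<in> selections" and active: "energy_sel s h = energy h" and e: "e \<in> E"
  shows "\<bar>h $ fst (s e) - h $ snd (s e)\<bar> = edge_span h e"
proof -
  obtain x y where xy: "x \<in> e" "y \<in> e" "h $ x - h $ y = edge_span h e"
    using edges_nonempty e edge_span_attained by metis
  define s' where "s' = s(e := (x, y))"
  have s': "s' \<in> selections"
    using s e xy PiE_fun_upd[of "(x, y)" "\<lambda>e. e \<times> e" e s E]
    unfolding s'_def selections_def by (simp add: insert_absorb)
  define F where "F e' p = w e' * (h $ fst p - h $ snd p)\<^sup>2" for e' p
  have "(\<Sum>e'\<in>E. F e' (s' e')) - (\<Sum>e'\<in>E. F e' (s e')) = F e (x, y) - F e (s e)"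
    using e by (simp add: sum.remove[of E e] s'_def)
  moreover have "energy_sel s' h \<le> energy_sel s h"
    using energy_sel_le_energy[OF s'] active by simp
  then have "lam / 2 * (\<Sum>e'\<in>E. F e' (s' e')) \<le> lam / 2 * (\<Sum>e'\<in>E. F e' (s e'))"
    unfolding energy_sel_def F_def by simp
  ultimately have "F e (x, y) \<le> F e (s e)" using lam_pos by simp
  then have "(edge_span h e)\<^sup>2 \<le> \<bar>h $ fst (s e) - h $ snd (s e)\<bar>\<^sup>2"
    using weights_pos e xy(3) unfolding F_def by simp
  then have "edge_span h e \<le> \<bar>h $ fst (s e) - h $ snd (s e)\<bar>"
    by (rule power2_le_imp_le) simp
  moreover have "fst (s e) \<in> e" "snd (s e) \<in> e" using selection_in_edge[OF s e] by auto
  then have "\<bar>h $ fst (s e) - h $ snd (s e)\<bar> \<le> edge_span h e"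
    using edge_span_ge[of "fst (s e)" e "snd (s e)" h] edge_span_ge[of "snd (s e)" e "fst (s e)" h]
    by (simp add: abs_le_iff)
  ultimately show ?thesis by linarith
qed

lemma grad_active_selection:
  assumes "s \<in> selections" "energy_sel s h = energy h"
  shows "grad_sel s h = (\<chi> x. deg x * h $ x - f $ x)
    + lam *\<^sub>R (\<Sum>e\<in>E. (w e * edge_span h e) *\<^sub>R oriented_diff h (fst (s e)) (snd (s e)))"
proof -
  have "(w e * (h $ fst (s e) - h $ snd (s e))) *\<^sub>R (hdelta (fst (s e)) - hdelta (snd (s e)))
      = (w e * edge_span h e) *\<^sub>R oriented_diff h (fst (s e)) (snd (s e))" if "e \<in> E" for e
  proof -
    have "(w e * (h $ fst (s e) - h $ snd (s e))) *\<^sub>R (hdelta (fst (s e)) - hdelta (snd (s e)))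
        = w e *\<^sub>R (\<bar>h $ fst (s e) - h $ snd (s e)\<bar> *\<^sub>R oriented_diff h (fst (s e)) (snd (s e)))"
      by (simp only: scaleR_scaleR[symmetric] scaleR_diff_hdelta_oriented)
    then show ?thesis by (simp add: active_selection_edge_span[OF assms that])
  qed
  then have "(\<Sum>e\<in>E. (w e * (h $ fst (s e) - h $ snd (s e)))
        *\<^sub>R (hdelta (fst (s e)) - hdelta (snd (s e))))
      = (\<Sum>e\<in>E. (w e * edge_span h e) *\<^sub>R oriented_diff h (fst (s e)) (snd (s e)))"
    by (rule sum.cong[OF refl])
  then show ?thesis unfolding grad_sel_def by simp
qed

lemma resolvent_inclusion_solvable: "\<exists>g. \<exists>u\<in>nLap E w g. f = g + lam *\<^sub>R u"
proof -
  obtain h0 where min: "\<forall>h. energy h0 \<le> energy h" using energy_has_minimiser by blast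
  define A where "A = {s\<in>selections. energy_sel s h0 = energy h0}"
  have finite_A: "finite A" unfolding A_def using finite_selections by simp
  have active: "s \<in> selections" "energy_sel s h0 = energy h0" if "s \<in> A" for s
    using that unfolding A_def by auto
  have "0 \<in> convex hull ((\<lambda>s. grad_sel s h0) ` A)"
    unfolding A_def energy_def
    by (rule zero_in_convex_hull_active_gradients[where C = curv_sel])
      (use finite_selections selections_nonempty energy_sel_line min in \<open>auto simp: energy_def\<close>)
  then obtain \<mu> where \<mu>: "\<forall>s\<in>A. 0 \<le> \<mu> s" "sum \<mu> A = 1" "(\<Sum>s\<in>A. \<mu> s *\<^sub>R grad_sel s h0) = 0"
    by (rule convex_hull_finite_image[OF finite_A])
  define b where "b e = (\<Sum>s\<in>A. \<mu> s *\<^sub>R oriented_diff h0 (fst (s e)) (snd (s e)))" for e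
  have b_Bset: "b e \<in> Bset e" if "e \<in> E" for e
    unfolding b_def
  proof (rule convex_sum[OF finite_A _ \<mu>(2)])
    show "convex (Bset e)" unfolding Bset_def by (rule convex_convex_hull)
    show "0 \<le> \<mu> s" if "s \<in> A" for s using \<mu>(1) that by blast
    show "oriented_diff h0 (fst (s e)) (snd (s e)) \<in> Bset e" if "s \<in> A" for s
      using selection_in_edge[OF active(1)[OF that] \<open>e \<in> E\<close>] by (auto intro: oriented_diff_in_Bset)
  qed
  have b_inner: "inner (b e) h0 = edge_span h0 e" if "e \<in> E" for e
  proof -
    have "inner (b e) h0 = (\<Sum>s\<in>A. \<mu> s * edge_span h0 e)"
      unfolding b_def inner_sum_left inner_scaleR_left inner_oriented_diff
      by (rule sum.cong[OF refl]) (simp add: active_selection_edge_span[OF active that])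
    then show ?thesis using \<mu>(2) by (simp add: sum_distrib_right[symmetric])
  qed
  have b_max: "\<forall>c\<in>Bset e. inner c h0 \<le> inner (b e) h0" if "e \<in> E" for e
  proof
    fix c assume "c \<in> Bset e"
    moreover have "\<forall>x\<in>e. \<forall>y\<in>e. h0 $ x - h0 $ y \<le> edge_span h0 e" by (simp add: edge_span_ge)
    ultimately show "inner c h0 \<le> inner (b e) h0" by (simp add: b_inner[OF that] Bset_inner_le)
  qed
  define U where "U = (\<Sum>e\<in>E. (w e * edge_span h0 e) *\<^sub>R b e)"
  have U_eq: "U = (\<Sum>e\<in>E. (w e * inner (b e) h0) *\<^sub>R b e)"
    unfolding U_def by (rule sum.cong[OF refl]) (simp add: b_inner)
  have "U \<in> hLap E w h0"
    unfolding hLap_def U_eq by (intro CollectI exI[of _ b]) (simp add: b_Bset b_max)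
  moreover have "Dinv E w (\<chi> x. deg x * h0 $ x) = h0"
    using deg_pos by (simp add: Dinv_def vec_eq_iff) (metis order_less_irrefl)
  moreover have "f = (\<chi> x. deg x * h0 $ x) + lam *\<^sub>R U"
  proof -
    define c where "c = (\<chi> x. deg x * h0 $ x - f $ x)"
    define v where
      "v s = (\<Sum>e\<in>E. (w e * edge_span h0 e) *\<^sub>R oriented_diff h0 (fst (s e)) (snd (s e)))" for s
    have "0 = (\<Sum>s\<in>A. \<mu> s *\<^sub>R grad_sel s h0)" using \<mu>(3) by simp
    also have "\<dots> = (\<Sum>s\<in>A. \<mu> s *\<^sub>R (c + lam *\<^sub>R v s))"
      unfolding c_def v_def by (rule sum.cong[OF refl]) (simp add: grad_active_selection[OF active])
    also have "\<dots> = c + lam *\<^sub>R (\<Sum>s\<in>A. \<mu> s *\<^sub>R v s)"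
      using \<mu>(2) by (simp add: scaleR_add_right sum.distrib scaleR_sum_left[symmetric]
          scaleR_sum_right mult.commute)
    also have "(\<Sum>s\<in>A. \<mu> s *\<^sub>R v s) = U"
      unfolding U_def b_def v_def scaleR_sum_right
      by (subst sum.swap) (simp add: mult.commute)
    finally show ?thesis by (simp add: c_def vec_eq_iff algebra_simps)
  qed
  ultimately show ?thesis unfolding nLap_def by metis
qed

end

context weighted_hypergraph
begin

lemma resolvent_solves:
  assumes "lam > 0"
  shows "\<exists>u\<in>nLap E w (resolvent E w lam f). f = resolvent E w lam f + lam *\<^sub>R u"
proof -
  interpret resolvent_energy E w f lam by unfold_locales (rule assms)
  have "\<exists>!g. \<exists>u\<in>nLap E w g. f = g + lam *\<^sub>R u"
    using resolvent_inclusion_solvable resolvent_inclusion_unique[OF assms] by metis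
  then show ?thesis unfolding resolvent_def by (rule theI')
qed

lemma LipW_deviation_le_hdist_moment:
  fixes z :: 'v
  assumes "f \<in> LipW E w"
  defines "k \<equiv> \<chi> x. f $ z / hdeg E w z * hdeg E w x"
  shows "winner E w (f - k) (f - k) \<le> hdist_moment E w z"
  unfolding winner_def hdist_moment_def
proof (rule sum_mono)
  fix y
  have dy: "hdeg E w y > 0" using deg_pos by blast
  have "\<bar>f $ y / hdeg E w y - f $ z / hdeg E w z\<bar> \<le> real (hdist E y z)"
    using assms(1) unfolding LipW_def by blast
  then have "(f $ y / hdeg E w y - f $ z / hdeg E w z)\<^sup>2 \<le> (real (hdist E y z))\<^sup>2"
    by (metis abs_ge_zero power2_abs power_mono)
  moreover have "(f - k) $ y * (f - k) $ y / hdeg E w y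
      = hdeg E w y * (f $ y / hdeg E w y - f $ z / hdeg E w z)\<^sup>2"
    using dy by (simp add: k_def field_simps power2_eq_square)
  ultimately show "(f - k) $ y * (f - k) $ y / hdeg E w y \<le> hdeg E w y * (real (hdist E y z))\<^sup>2"
    using dy by simp
qed

lemma resolvent_coord_bound:
  assumes "lam > 0" "f \<in> LipW E w"
  shows "\<bar>resolvent E w lam f $ x / hdeg E w x - f $ z / hdeg E w z\<bar>
    \<le> 1 + hdist_moment E w z / hdeg E w x"
proof -
  define g c where "g = resolvent E w lam f" and "c = f $ z / hdeg E w z"
  define a where "a = g - (\<chi> x. c * hdeg E w x)"
  obtain u where u: "u \<in> nLap E w g" "f = g + lam *\<^sub>R u"
    using resolvent_solves[OF assms(1)] unfolding g_def by blast
  have dx: "hdeg E w x > 0" using deg_pos by blast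
  have "a $ x * a $ x / hdeg E w x \<le> winner E w a a"
    unfolding winner_def by (rule member_le_sum) (use deg_pos in \<open>auto intro: divide_nonneg_pos\<close>)
  also have "\<dots> \<le> hdist_moment E w z"
    using resolvent_inclusion_nonexpansive[OF assms(1) u, of c] LipW_deviation_le_hdist_moment[OF assms(2), of z]
    unfolding a_def c_def by simp
  finally have "(a $ x / hdeg E w x)\<^sup>2 \<le> hdist_moment E w z / hdeg E w x"
    using dx by (simp add: power2_eq_square pos_le_divide_eq)
  moreover have "g $ x / hdeg E w x - c = a $ x / hdeg E w x"
    using dx by (simp add: a_def field_simps)
  ultimately show ?thesis
    using abs_le_1_plus_square[of "a $ x / hdeg E w x"] unfolding g_def c_def by linarith
qed

lemma bdd_above_resolvent_pairing:
  assumes "lam > 0"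
  shows "bdd_above ((\<lambda>f. winner E w (resolvent E w lam f) (hdelta z - hdelta y)) ` LipW E w)"
proof (rule bdd_aboveI2)
  fix f assume "f \<in> LipW E w"
  from resolvent_coord_bound[OF assms this, of z z] resolvent_coord_bound[OF assms this, of y z]
  show "winner E w (resolvent E w lam f) (hdelta z - hdelta y)
      \<le> 2 + hdist_moment E w z / hdeg E w z + hdist_moment E w z / hdeg E w y"
    unfolding winner_hdelta_diff by linarith
qed

lemma eventually_pairing_le_if_adjacent:
  assumes adj_bound: "\<forall>x y. hadj E x y \<and> x \<noteq> y \<longrightarrow> kappa_low E w x y \<ge> ereal a"
    and "a' < a" and "hadj E z y"
  shows "eventually (\<lambda>lam. \<forall>f\<in>LipW E w.
    winner E w (resolvent E w lam f) (hdelta z - hdelta y) \<le> 1 - a' * lam) (at_right 0)"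
proof (cases "z = y")
  case True
  have lim: "((\<lambda>lam. 1 - a' * lam) \<longlongrightarrow> 1) (at_right (0::real))"
    by (auto intro!: tendsto_eq_intros)
  have "eventually (\<lambda>lam. 0 < 1 - a' * lam) (at_right (0::real))"
    using order_tendstoD(1)[OF lim, of 0] by simp
  then show ?thesis by eventually_elim (simp add: True winner_def)
next
  case False
  have "ereal a' < ereal a" using assms(2) by simp
  also have "\<dots> \<le> kappa_low E w z y" using adj_bound assms(3) False by blast
  finally have "ereal a' < kappa_low E w z y" .
  then have "eventually (\<lambda>lam. a' < kappa E w lam z y / lam) (at_right 0)"
    unfolding kappa_low_def by (auto dest: less_LiminfD)
  with eventually_at_right_less show ?thesis
  proof eventually_elim
    case (elim lam)
    then have "KD E w lam z y < 1 - a' * lam"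
      unfolding kappa_def hdist_eq_1_if_adj[OF assms(3) False] by (simp add: field_simps)
    moreover have "winner E w (resolvent E w lam f) (hdelta z - hdelta y) \<le> KD E w lam z y"
      if "f \<in> LipW E w" for f
      unfolding KD_def by (rule cSUP_upper[OF that bdd_above_resolvent_pairing[OF elim(1)]])
    ultimately show ?case by fastforce
  qed
qed

lemma eventually_pairing_le_if_chain:
  assumes adj_bound: "\<forall>x y. hadj E x y \<and> x \<noteq> y \<longrightarrow> kappa_low E w x y \<ge> ereal a"
    and "a' < a"
  shows "(hadj E ^^ n) x y \<Longrightarrow> eventually (\<lambda>lam. \<forall>f\<in>LipW E w.
    winner E w (resolvent E w lam f) (hdelta x - hdelta y) \<le> real n * (1 - a' * lam)) (at_right 0)"
proof (induction n arbitrary: y)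
  case 0
  then show ?case by (simp add: winner_def)
next
  case (Suc n)
  from Suc.prems obtain z where z: "(hadj E ^^ n) x z" "hadj E z y" by (rule relpowp_Suc_E)
  from Suc.IH[OF z(1)] eventually_pairing_le_if_adjacent[OF assms z(2)] show ?case
  proof eventually_elim
    case (elim lam)
    show ?case
    proof
      fix f assume "f \<in> LipW E w"
      have "winner E w (resolvent E w lam f) (hdelta x - hdelta y)
         = winner E w (resolvent E w lam f) (hdelta x - hdelta z)
           + winner E w (resolvent E w lam f) (hdelta z - hdelta y)"
        by (simp add: winner_hdelta_diff)
      also have "\<dots> \<le> real n * (1 - a' * lam) + (1 - a' * lam)"
        using elim \<open>f \<in> LipW E w\<close> by (intro add_mono) auto
      finally show "winner E w (resolvent E w lam f) (hdelta x - hdelta y)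
          \<le> real (Suc n) * (1 - a' * lam)"
        by (simp add: algebra_simps)
    qed
  qed
qed

lemma kappa_low_ge_if_adjacent_ge:
  assumes connected: "\<forall>x y. (hadj E)\<^sup>*\<^sup>* x y"
    and adj_bound: "\<forall>x y. hadj E x y \<and> x \<noteq> y \<longrightarrow> kappa_low E w x y \<ge> ereal a"
    and "x \<noteq> y"
  shows "kappa_low E w x y \<ge> ereal a"
  unfolding kappa_low_def le_Liminf_iff
proof (intro allI impI)
  fix r :: ereal assume r: "r < ereal a"
  show "eventually (\<lambda>lam. r < ereal (kappa E w lam x y / lam)) (at_right 0)"
  proof (cases r)
    case (real r0)
    define a' where "a' = (r0 + a) / 2"
    have a': "a' < a" "r0 < a'" using r real unfolding a'_def by auto
    define n where "n = hdist E x y"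
    have path: "(hadj E ^^ n) x y" unfolding n_def using relpowp_hdist[of E x y] connected by blast
    have "n \<ge> 1" using path \<open>x \<noteq> y\<close> by (cases n) auto
    from eventually_pairing_le_if_chain[OF adj_bound a'(1) path] eventually_at_right_less
    show ?thesis
    proof eventually_elim
      case (elim lam)
      have "0 \<in> LipW E w" unfolding LipW_def by simp
      then have "KD E w lam x y \<le> real n * (1 - a' * lam)"
        unfolding KD_def using elim(1) by (intro cSUP_least) auto
      then have "a' * lam \<le> kappa E w lam x y"
        using \<open>n \<ge> 1\<close> unfolding kappa_def n_def[symmetric] by (simp add: field_simps)
      then have "a' \<le> kappa E w lam x y / lam" using elim(2) by (simp add: field_simps)
      then show ?case using a'(2) real by simp
    qed
  qed (use r in auto)
qed

end

lemma INF_eq_if_lower_bounds_extend: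
  fixes k :: "'a \<Rightarrow> ereal"
  assumes "A \<subseteq> B" and extend: "\<And>r::real. \<forall>p\<in>A. ereal r \<le> k p \<Longrightarrow> \<forall>p\<in>B. ereal r \<le> k p"
  shows "(INF p\<in>A. k p) = (INF p\<in>B. k p)"
proof (rule antisym)
  show "(INF p\<in>A. k p) \<le> (INF p\<in>B. k p)"
  proof (rule INF_greatest, rule dense_le)
    fix p b assume "p \<in> B" "b < (INF p\<in>A. k p)"
    then show "b \<le> k p"
    proof (cases b)
      case (real r)
      then have "\<forall>q\<in>A. ereal r \<le> k q"
        using \<open>b < _\<close> by (auto intro: order.trans[OF less_imp_le INF_lower])
      with extend \<open>p \<in> B\<close> real show ?thesis by blast
    qed (use \<open>b < _\<close> in auto)
  qed
  show "(INF p\<in>B. k p) \<le> (INF p\<in>A. k p)" using assms(1) by (rule INF_superset_mono) simp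
qed

theorem mainTheorem11:
  fixes E :: "'v::finite set set" and w :: "'v set \<Rightarrow> real" and a :: real
  assumes edges_nonempty: "\<forall>e\<in>E. e \<noteq> {}"
    and weights_pos: "\<forall>e\<in>E. w e > 0"
    and deg_pos: "\<forall>x. hdeg E w x > 0"
    and connected: "\<forall>x y. (hadj E)\<^sup>*\<^sup>* x y"
    and card_V: "CARD('v) \<ge> 2"
    and adj_bound: "\<forall>x y. hadj E x y \<and> x \<noteq> y \<longrightarrow> kappa_low E w x y \<ge> ereal a"
  shows "(\<forall>x y. x \<noteq> y \<longrightarrow> kappa_low E w x y \<ge> ereal a)
    \<and> (INF p\<in>{(x, y). hadj E x y \<and> x \<noteq> y}. kappa_low E w (fst p) (snd p))
      = (INF p\<in>{(x, y). x \<noteq> y}. kappa_low E w (fst p) (snd p))"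
proof -
  interpret weighted_hypergraph E w using edges_nonempty weights_pos deg_pos by unfold_locales
  have "(INF p\<in>{(x, y). hadj E x y \<and> x \<noteq> y}. kappa_low E w (fst p) (snd p))
      = (INF p\<in>{(x, y). x \<noteq> y}. kappa_low E w (fst p) (snd p))"
  proof (rule INF_eq_if_lower_bounds_extend)
    fix r :: real
    assume "\<forall>p\<in>{(x, y). hadj E x y \<and> x \<noteq> y}. ereal r \<le> kappa_low E w (fst p) (snd p)"
    then show "\<forall>p\<in>{(x, y). x \<noteq> y}. ereal r \<le> kappa_low E w (fst p) (snd p)"
      using kappa_low_ge_if_adjacent_ge[OF connected, of r] by auto
  qed auto
  then show ?thesis using kappa_low_ge_if_adjacent_ge[OF connected adj_bound] by blast
qed

end
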